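(* Let $r,a,b\in\mathbb{N}$ with $b\ge2$ and $a=b(b-1)$. Then for any $\varepsilon>0$ and any completely multiplicative functions $f_1,\ldots,f_r:\mathbb{N}\to\mathbb{S}^1$, the set $$\mathcal{A}_{a,b,a,b-1}(f_1,\ldots,f_r;\varepsilon):=\{n\in\mathbb{N}: |f_j(an+b)-f_j(an+b-1)|<\varepsilon \text{ for all } 1\le j\le r\}$$ has positive lower asymptotic density.
   Context: $\mathbb{N}=\{1,2,\dots\}$, $\mathbb{S}^1$ the unit circle; completely multiplicative means $f(mn)=f(m)f(n)$. The lower asymptotic density of $A\subseteq\mathbb{N}$ is $\underline{d}(A)=\liminf_{N\to\infty}|A\cap\{1,\dots,N\}|/N$. *)

theory Defs
  imports "HOL-Analysis.Analysis"
begin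

text \<open>Completely multiplicative function N -> S^1, with N = {1,2,...}; values at 0 are irrelevant.\<close>
definition cm_unit :: "(nat \<Rightarrow> complex) \<Rightarrow> bool" where
  "cm_unit f \<longleftrightarrow> (\<forall>n\<ge>1. norm (f n) = 1) \<and> (\<forall>m\<ge>1. \<forall>n\<ge>1. f (m * n) = f m * f n)"

definition lower_density :: "nat set \<Rightarrow> real" where
  "lower_density A = real_of_ereal (liminf (\<lambda>N. ereal (real (card (A \<inter> {1..N})) / real N)))"

end

theory Submission
  imports Defs
begin

text \<open>
  Call a finite set C of positive integers a ratio clique if b(y - x) divides x and (b - 1)(y - x)
  divides y for all x < y in C. For such a pair put q = x/(y - x), so q y = (q + 1) x. With
  A = x a w and A' = y a w complete multiplicativity gives
  |f(q(A' - 1)) - f(q(A' - 1) - 1)| = |f(A)/f(A - 1) - f(A')/f(A' - 1)|, and the divisibility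
  conditions force q(A' - 1) \<equiv> b (mod a), i.e. q(A' - 1) = a n + b for some n \<ge> 1.
  Ratio cliques of every size exist (adjoin a point below a suitable dilate). Taking a clique larger
  than the number of \<epsilon>-cells of the unit polydisc, every w \<ge> 1 yields a pair whose quotient
  vectors f_j(A)/f_j(A - 1) are \<epsilon>-close, hence a good n \<le> (max C)^2 w; for a fixed pair distinct
  w give distinct n, so the good set has lower density at least 1/(2 (max C)^2 |C|^2).
\<close>

section \<open>Ratio cliques\<close>

definition ratio_clique :: "nat \<Rightarrow> nat set \<Rightarrow> bool" where
  "ratio_clique b C \<longleftrightarrow> finite C \<and> (\<forall>x\<in>C. 0 < x) \<and>
     (\<forall>x\<in>C. \<forall>y\<in>C. x < y \<longrightarrow> b * (y - x) dvd x \<and> (b - 1) * (y - x) dvd y)"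

lemma exists_pos_mult_add_dvd:
  fixes M R T :: nat
  assumes "0 < M" "0 < R" "gcd M R dvd T"
  shows "\<exists>s>0. R dvd M * s + T"
proof -
  obtain x y where xy: "M * x = R * y + gcd M R" using bezout_nat[of M R] assms(1) by auto
  obtain k where k: "T = gcd M R * k" using assms(3) by (rule dvdE)
  obtain R' where R': "R = Suc R'" using assms(2) by (cases R) auto
  define s where "s = x * k * R' + R"
  have "M * s + T = (M * x) * k * R' + M * R + T" by (simp add: s_def algebra_simps)
  also have "\<dots> = (R * y * k + T) * R' + M * R + T" using xy k by (simp add: algebra_simps)
  also have "\<dots> = R * (y * k * R' + T + M)" using R' by (simp add: algebra_simps)
  finally have "R dvd M * s + T" by simp
  moreover have "s > 0" using assms(2) by (simp add: s_def)
  ultimately show ?thesis by blast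
qed

lemma ratio_clique_image_affine:
  assumes b: "2 \<le> b" and Y: "ratio_clique b Y"
    and V: "\<And>x y. x \<in> Y \<Longrightarrow> y \<in> Y \<Longrightarrow> x < y \<Longrightarrow> (b - 1) * (y - x) dvd V"
  shows "ratio_clique b ((\<lambda>y. (b - 1) * (b * V + y)) ` Y)"
  unfolding ratio_clique_def
proof (intro conjI ballI impI)
  let ?e = "\<lambda>y. (b - 1) * (b * V + y)"
  have c0: "0 < b - 1" using b by simp
  show "finite (?e ` Y)" "\<And>u. u \<in> ?e ` Y \<Longrightarrow> 0 < u"
    using Y c0 by (auto simp: ratio_clique_def)
  fix u v assume "u \<in> ?e ` Y" "v \<in> ?e ` Y" "u < v"
  then obtain x y where xy: "x \<in> Y" "y \<in> Y" "x < y" and uv: "u = ?e x" "v = ?e y"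
    using c0 by auto
  have diff: "v - u = (b - 1) * (y - x)"
    unfolding uv by (metis add_diff_cancel_left diff_mult_distrib2)
  have cV: "(b - 1) * (y - x) dvd V" using V xy by simp
  have "b * (y - x) dvd b * V + x"
    using cV Y xy by (auto simp: ratio_clique_def intro: dvd_add dvd_mult_left)
  moreover have "(b - 1) * (y - x) dvd b * V + y"
    using cV Y xy by (auto simp: ratio_clique_def intro: dvd_add)
  ultimately show "b * (v - u) dvd u" "(b - 1) * (v - u) dvd v"
    unfolding diff by (simp_all add: uv mult.left_commute)
qed

lemma ratio_clique_insert_below:
  assumes "ratio_clique b X" "0 < L"
    and "\<And>x. x \<in> X \<Longrightarrow> L < x \<and> b * (x - L) dvd L \<and> (b - 1) * (x - L) dvd x"
  shows "ratio_clique b (insert L X)"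
  using assms unfolding ratio_clique_def by (metis insert_iff finite_insert not_less_iff_gr_or_eq)

lemma ratio_clique_insert_dilate:
  fixes b V L :: nat and m :: "nat \<Rightarrow> nat"
  assumes b: "2 \<le> b" and Y: "ratio_clique b Y"
    and V: "\<And>x y. x \<in> Y \<Longrightarrow> y \<in> Y \<Longrightarrow> x < y \<Longrightarrow> (b - 1) * (y - x) dvd V"
    and L: "0 < L" and e: "\<And>y. (b - 1) * (b * V + y) = L + m y" and m0: "\<And>y. 0 < m y"
    and mL: "\<And>y. y \<in> Y \<Longrightarrow> b * m y dvd L" and cm: "\<And>y. coprime (m y) (b - 1)"
  defines "X \<equiv> insert L ((\<lambda>y. (b - 1) * (b * V + y)) ` Y)"
  shows "ratio_clique b X" "card X = Suc (card Y)"
proof -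
  let ?e = "\<lambda>y. (b - 1) * (b * V + y)"
  have "ratio_clique b (?e ` Y)" by (rule ratio_clique_image_affine[OF b Y V])
  then show "ratio_clique b X" unfolding X_def
  proof (rule ratio_clique_insert_below[OF _ L])
    fix u assume "u \<in> ?e ` Y"
    then obtain y where y: "y \<in> Y" and u: "u = ?e y" by auto
    have "m y dvd L" using mL[OF y] by (rule dvd_mult_right)
    then have "m y dvd ?e y" using e[of y] by simp
    then have "m y dvd b * V + y" using cm by (simp add: coprime_dvd_mult_right_iff)
    then have "(b - 1) * m y dvd u" by (simp add: u)
    moreover have "u - L = m y" "L < u" using u e[of y] m0[of y] by simp_all
    ultimately show "L < u \<and> b * (u - L) dvd L \<and> (b - 1) * (u - L) dvd u" using mL[OF y] by simp
  qed
  have "inj ?e" by (rule injI) (use b in simp)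
  moreover have "L \<noteq> ?e y" for y using e[of y] m0[of y] by simp
  then have "L \<notin> ?e ` Y" by blast
  moreover have "finite Y" using Y by (simp add: ratio_clique_def)
  ultimately show "card X = Suc (card Y)" unfolding X_def by (simp add: card_image inj_on_subset)
qed

lemma exists_multiple_shift_dvd:
  fixes c D M n :: nat
  assumes "0 < c" "0 < D" "0 < M" "coprime M c"
  obtains Q where "0 < Q" "M dvd Q" "c ^ n * D dvd D + Q"
proof -
  have "gcd M (c ^ n * D) = gcd M D" using assms(4) by (simp add: gcd_mult_right_left_cancel)
  then obtain s where "0 < s" "c ^ n * D dvd M * s + D"
    using exists_pos_mult_add_dvd[OF assms(3), of "c ^ n * D"] assms(1,2) by auto
  then show thesis using assms(3) by (intro that[of "M * s"]) (simp_all add: add.commute)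
qed

lemma insert_dilate_diffs_dvd:
  fixes c W L E F :: nat and m :: "nat \<Rightarrow> nat"
  assumes e: "\<And>y. c * (W + y) = L + m y" and c: "0 < c"
    and E: "\<And>x y. x \<in> Y \<Longrightarrow> y \<in> Y \<Longrightarrow> x < y \<Longrightarrow> y - x dvd E"
    and F: "\<And>y. y \<in> Y \<Longrightarrow> m y dvd F"
    and x: "x \<in> insert L ((\<lambda>y. c * (W + y)) ` Y)" and y: "y \<in> insert L ((\<lambda>y. c * (W + y)) ` Y)"
    and xy: "x < y"
  shows "y - x dvd c * E * F"
proof (cases "x = L")
  case True
  then obtain y0 where "y0 \<in> Y" "y = L + m y0" using y xy e by auto
  then show ?thesis using True F by (simp add: dvd_mult)
next
  case False
  then obtain x0 where "x0 \<in> Y" and x0: "x = c * (W + x0)" using x by auto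
  then have "y \<noteq> L" using xy e[of x0] by simp
  then obtain y0 where "y0 \<in> Y" and y0: "y = c * (W + y0)" using y by auto
  then have "x0 < y0" using xy c x0 by simp
  then have "c * (y0 - x0) dvd c * E" using E \<open>x0 \<in> Y\<close> \<open>y0 \<in> Y\<close> by simp
  moreover have "y - x = c * (y0 - x0)"
    unfolding x0 y0 by (metis add_diff_cancel_left diff_mult_distrib2)
  ultimately show ?thesis by (simp add: dvd_mult2)
qed

text \<open>
  The new clique is the dilate c(bV + Y), c = b - 1, together with the point L = bQ below it, so
  its differences are c(y - x) and m y = c y + b D. The multiplier Q makes V = (D + Q)/c integral
  and divisible by c^(k+1) D; the part of D coprime to c grows by the factor \<Prod>m y.
\<close>
lemma ratio_clique_extend:
  fixes b k D :: nat
  assumes b: "2 \<le> b" and Y: "ratio_clique b Y"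
    and D: "\<And>x y. x \<in> Y \<Longrightarrow> y \<in> Y \<Longrightarrow> x < y \<Longrightarrow> y - x dvd (b - 1) ^ k * D"
    and cD: "coprime D (b - 1)" and D0: "0 < D"
  obtains X D' where "ratio_clique b X" "card X = Suc (card Y)"
    "\<forall>x\<in>X. \<forall>y\<in>X. x < y \<longrightarrow> y - x dvd (b - 1) ^ Suc k * D'"
    "coprime D' (b - 1)" "0 < D'"
proof -
  define c where "c = b - 1"
  have c0: "0 < c" and bc: "b = c + 1" using b by (auto simp: c_def)
  have finY: "finite Y" using Y by (simp add: ratio_clique_def)
  define m where "m y = c * y + b * D" for y
  define M where "M = (\<Prod>y\<in>Y. m y)"
  have m0: "0 < m y" for y using D0 b by (simp add: m_def)
  have M0: "0 < M" using m0 by (simp add: M_def prod_pos)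
  have mM: "m y dvd M" if "y \<in> Y" for y unfolding M_def using finY that by (rule dvd_prodI)
  have "coprime b c" "coprime D c" using cD[unfolded bc] by (simp_all add: bc)
  then have "coprime (b * D) c" by simp
  then have cm: "coprime (m y) c" for y
    unfolding m_def using gcd_add_mult[of c y "b * D"]
    by (simp add: coprime_iff_gcd_eq_1 gcd.commute mult.commute)
  have cM: "coprime M c" unfolding M_def using cm by (simp add: prod_coprime_left)
  obtain Q where Q0: "0 < Q" and MQ: "M dvd Q" and DQ: "c ^ (k + 2) * D dvd D + Q"
    using exists_multiple_shift_dvd[OF c0 D0 M0 cM] .
  define V where "V = (D + Q) div c"
  have "c * (c ^ (k + 1) * D) dvd D + Q" using DQ by (simp add: mult_ac)
  then have V: "c * V = D + Q" and cV: "c ^ (k + 1) * D dvd V" by (auto simp: V_def)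
  define L where "L = b * Q"
  have e: "c * (b * V + y) = L + m y" for y
  proof -
    have "c * (b * V + y) = b * (c * V) + c * y" by (simp add: algebra_simps)
    also have "\<dots> = b * (D + Q) + c * y" by (simp only: V)
    also have "\<dots> = L + m y" by (simp add: L_def m_def algebra_simps)
    finally show ?thesis .
  qed
  define X where "X = insert L ((\<lambda>y. c * (b * V + y)) ` Y)"
  have VD: "(b - 1) * (y - x) dvd V" if "x \<in> Y" "y \<in> Y" "x < y" for x y
  proof -
    have "c * (y - x) dvd c ^ (k + 1) * D" using D that by (simp add: c_def mult.assoc)
    from dvd_trans[OF this cV] show ?thesis by (simp add: c_def)
  qed
  have L0: "0 < L" using Q0 b by (simp add: L_def)
  have mL: "b * m y dvd L" if "y \<in> Y" for y using mM[OF that] MQ by (simp add: L_def dvd_trans)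
  have X: "ratio_clique b X" "card X = Suc (card Y)"
    using ratio_clique_insert_dilate[OF b Y VD L0 e[unfolded c_def] m0 mL cm[unfolded c_def]]
    by (simp_all add: X_def c_def)
  have "\<forall>x\<in>X. \<forall>y\<in>X. x < y \<longrightarrow> y - x dvd c * (c ^ k * D) * M"
    unfolding X_def using insert_dilate_diffs_dvd[OF e c0 D[folded c_def] mM] by blast
  moreover have "c * (c ^ k * D) * M = (b - 1) ^ Suc k * (D * M)" by (simp add: c_def mult_ac)
  moreover have "coprime (D * M) (b - 1)" using cD cM by (simp add: c_def)
  ultimately show thesis using X D0 M0 that[of X "D * M"] by simp
qed

lemma ratio_clique_exists:
  assumes "2 \<le> b"
  obtains C where "ratio_clique b C" "card C = Suc k"
proof -
  have "\<exists>C D. ratio_clique b C \<and> card C = Suc k \<and> coprime D (b - 1) \<and> 0 < D \<and>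
          (\<forall>x\<in>C. \<forall>y\<in>C. x < y \<longrightarrow> y - x dvd (b - 1) ^ k * D)"
  proof (induction k)
    case 0
    show ?case by (rule exI[of _ "{1}"], rule exI[of _ 1]) (simp add: ratio_clique_def)
  next
    case (Suc k)
    then obtain C D where C: "ratio_clique b C" "card C = Suc k" "coprime D (b - 1)" "0 < D"
      and dC: "\<And>x y. x \<in> C \<Longrightarrow> y \<in> C \<Longrightarrow> x < y \<Longrightarrow> y - x dvd (b - 1) ^ k * D"
      by blast
    obtain X D' where "ratio_clique b X" "card X = Suc (card C)"
      "\<forall>x\<in>X. \<forall>y\<in>X. x < y \<longrightarrow> y - x dvd (b - 1) ^ Suc k * D'"
      "coprime D' (b - 1)" "0 < D'"
      by (rule ratio_clique_extend[OF assms C(1) dC C(3,4)])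
    then show ?case using C(2) by auto
  qed
  then show thesis using that by blast
qed

section \<open>Completely multiplicative unimodular functions\<close>

lemma cm_unit_mult: "cm_unit f \<Longrightarrow> 1 \<le> m \<Longrightarrow> 1 \<le> n \<Longrightarrow> f (m * n) = f m * f n"
  by (simp add: cm_unit_def)

lemma cm_unit_norm: "cm_unit f \<Longrightarrow> 1 \<le> n \<Longrightarrow> norm (f n) = 1"
  by (simp add: cm_unit_def)

definition step_quotient :: "(nat \<Rightarrow> complex) \<Rightarrow> nat \<Rightarrow> complex" where
  "step_quotient f n = f n / f (n - 1)"

lemma cm_unit_norm_step_quotient:
  "cm_unit f \<Longrightarrow> 2 \<le> n \<Longrightarrow> norm (step_quotient f n) = 1"
  by (simp add: step_quotient_def norm_divide cm_unit_norm)

lemma cm_unit_norm_diff_pred: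
  fixes f :: "nat \<Rightarrow> complex" and q A A' :: nat
  assumes f: "cm_unit f" and q: "1 \<le> q" and A: "2 \<le> A" and A': "2 \<le> A'"
    and rel: "q * A' = (q + 1) * A"
  shows "norm (f (q * (A' - 1)) - f (q * (A' - 1) - 1)) = norm (step_quotient f A - step_quotient f A')"
proof -
  have factor: "\<alpha> * Y' - \<beta> * Y = (X / Y - X' / Y') * (\<beta> * Y * Y' / X')"
    if "\<alpha> * X' = \<beta> * X" "X' \<noteq> 0" "Y \<noteq> 0" "Y' \<noteq> 0" for \<alpha> \<beta> X Y X' Y' :: complex
    using that by (simp add: field_simps)
  have pred: "q * (A' - 1) - 1 = (q + 1) * (A - 1)"
    using rel A A' by (simp add: diff_mult_distrib2 algebra_simps)
  have rel_f: "f q * f A' = f (q + 1) * f A"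
    using cm_unit_mult[OF f, of q A'] cm_unit_mult[OF f, of "q + 1" A] rel q A A' by simp
  have split: "f (q * (A' - 1)) = f q * f (A' - 1)" "f ((q + 1) * (A - 1)) = f (q + 1) * f (A - 1)"
    using q A A' by (intro cm_unit_mult[OF f]; simp)+
  have norms: "norm (f A) = 1" "norm (f (A - 1)) = 1" "norm (f A') = 1"
    "norm (f (A' - 1)) = 1" "norm (f (q + 1)) = 1"
    using cm_unit_norm[OF f] A A' by simp_all
  have "f (q * (A' - 1)) - f (q * (A' - 1) - 1)
      = (f A / f (A - 1) - f A' / f (A' - 1)) * (f (q + 1) * f (A - 1) * f (A' - 1) / f A')"
    unfolding pred split using rel_f norms by (intro factor) auto
  then show ?thesis using norms by (simp add: step_quotient_def norm_mult norm_divide)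
qed

section \<open>Pigeonholing in the unit polydisc\<close>

lemma pigeonhole_less_pair:
  fixes F :: "'a::linorder \<Rightarrow> 'b"
  assumes "F ` C \<subseteq> D" "finite D" "card D < card C"
  shows "\<exists>x\<in>C. \<exists>y\<in>C. x < y \<and> F x = F y"
proof -
  have "card (F ` C) < card C" using assms card_mono le_less_trans by blast
  then obtain x y where "x \<in> C" "y \<in> C" "x \<noteq> y" "F x = F y"
    using pigeonhole unfolding inj_on_def by blast
  then show ?thesis by (metis linorder_neq_iff)
qed

definition cell :: "nat \<Rightarrow> complex \<Rightarrow> int \<times> int" where
  "cell m z = (\<lfloor>real m * Re z\<rfloor>, \<lfloor>real m * Im z\<rfloor>)"

lemma norm_diff_less_if_cell_eq:
  assumes m: "0 < m" and eq: "cell m z = cell m z'"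
  shows "norm (z - z') < 2 / real m"
proof -
  have floor_close: "\<bar>x - y\<bar> < 1" if "\<lfloor>x\<rfloor> = \<lfloor>y\<rfloor>" for x y :: real
    using that by linarith
  have "\<bar>real m * Re z - real m * Re z'\<bar> < 1" "\<bar>real m * Im z - real m * Im z'\<bar> < 1"
    using eq by (simp_all add: cell_def floor_close)
  then have "\<bar>real m * Re (z - z')\<bar> < 1" "\<bar>real m * Im (z - z')\<bar> < 1"
    by (simp_all add: right_diff_distrib)
  then have "real m * \<bar>Re (z - z')\<bar> < 1" "real m * \<bar>Im (z - z')\<bar> < 1"
    by (simp_all only: abs_mult abs_of_nat)
  then have "\<bar>Re (z - z')\<bar> < 1 / real m" "\<bar>Im (z - z')\<bar> < 1 / real m"
    using m by (simp_all add: pos_less_divide_eq mult.commute)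
  then show ?thesis using cmod_le[of "z - z'"] by linarith
qed

lemma cell_mem_box:
  assumes "norm z \<le> 1"
  shows "cell m z \<in> {-int m..int m} \<times> {-int m..int m}"
proof -
  have "\<bar>Re z\<bar> \<le> 1" "\<bar>Im z\<bar> \<le> 1"
    using assms abs_Re_le_cmod abs_Im_le_cmod order_trans by blast+
  then have "\<bar>real m * Re z\<bar> \<le> real m" "\<bar>real m * Im z\<bar> \<le> real m"
    by (simp_all add: abs_mult mult_left_le)
  then show ?thesis unfolding cell_def by (auto simp: abs_le_iff le_floor_iff floor_le_iff)
qed

lemma pigeonhole_close_pair:
  fixes J :: "'j set" and \<epsilon> :: real
  assumes J: "finite J" and \<epsilon>: "0 < \<epsilon>"
  shows "\<exists>K :: nat. \<forall>(C :: 'a::linorder set) (z :: 'a \<Rightarrow> 'j \<Rightarrow> complex).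
           K < card C \<longrightarrow> (\<forall>c\<in>C. \<forall>j\<in>J. norm (z c j) \<le> 1) \<longrightarrow>
           (\<exists>c\<in>C. \<exists>c'\<in>C. c < c' \<and> (\<forall>j\<in>J. norm (z c j - z c' j) < \<epsilon>))"
proof -
  obtain m :: nat where m: "2 / \<epsilon> < real m" using reals_Archimedean2 by blast
  moreover have "0 < 2 / \<epsilon>" using \<epsilon> by simp
  ultimately have m0: "0 < m" by linarith
  have m\<epsilon>: "2 / real m < \<epsilon>" using m \<epsilon> m0 by (simp add: field_simps)
  define Cells where "Cells = PiE J (\<lambda>_. {-int m..int m} \<times> {-int m..int m})"
  have "finite Cells" unfolding Cells_def using J by (intro finite_PiE) auto
  show ?thesis
  proof (intro exI[of _ "card Cells"] allI impI)
    fix C :: "'a set" and z :: "'a \<Rightarrow> 'j \<Rightarrow> complex"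
    assume C: "card Cells < card C" and z: "\<forall>c\<in>C. \<forall>j\<in>J. norm (z c j) \<le> 1"
    define key where "key c = restrict (\<lambda>j. cell m (z c j)) J" for c
    have "key ` C \<subseteq> Cells" using z cell_mem_box by (auto simp: key_def Cells_def)
    then obtain c c' where "c \<in> C" "c' \<in> C" "c < c'" "key c = key c'"
      using pigeonhole_less_pair \<open>finite Cells\<close> C by blast
    moreover have "norm (z c j - z c' j) < \<epsilon>" if "j \<in> J" "key c = key c'" for j
      using norm_diff_less_if_cell_eq[OF m0] m\<epsilon> that
      by (metis key_def restrict_apply' order.strict_trans)
    ultimately show "\<exists>c\<in>C. \<exists>c'\<in>C. c < c' \<and> (\<forall>j\<in>J. norm (z c j - z c' j) < \<epsilon>)" by blast
  qed
qed

section \<open>Witnesses from clique pairs\<close>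

lemma ratio_clique_pair_quotient:
  assumes C: "ratio_clique b C" and cC: "c \<in> C" "c' \<in> C" and cc: "c < c'"
  defines "q \<equiv> c div (c' - c)"
  shows "b dvd q" "b - 1 dvd q + 1" "q * c' = (q + 1) * c" "1 \<le> q" "q \<le> c"
proof -
  define d where "d = c' - c"
  have d0: "0 < d" using cc by (simp add: d_def)
  have c0: "0 < c" and dvds: "b * d dvd c" "(b - 1) * d dvd c'"
    using C cC cc unfolding ratio_clique_def d_def by blast+
  then have c: "c = q * d" by (simp add: q_def d_def[symmetric] dvd_mult_right)
  then have c': "c' = (q + 1) * d" using cc by (simp add: d_def)
  show "b dvd q" using dvds(1) d0 by (simp add: c)
  show "b - 1 dvd q + 1" using dvds(2) d0 unfolding c' by (simp only: dvd_times_right_cancel_iff)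
  show "q * c' = (q + 1) * c" by (simp add: c c' algebra_simps)
  show "1 \<le> q" using c0 c by (cases q) auto
  show "q \<le> c" using c d0 by simp
qed

lemma dvd_mult_pred_minus:
  fixes b q A :: nat
  assumes b: "2 \<le> b" and q: "b dvd q" "b - 1 dvd q + 1" and A: "b * (b - 1) dvd A"
  shows "b * (b - 1) dvd q * (A - 1) - b"
proof (cases "b \<le> q * (A - 1)")
  case True
  then have A1: "1 \<le> A" using b by (cases A) auto
  have "b - 1 dvd (q + 1) + (b - 1)" using q(2) by (rule dvd_add) simp
  then have "b - 1 dvd q + b" using b by simp
  moreover have "b dvd q + b" using q(1) by simp
  moreover have "coprime b (b - 1)" using b by (metis coprime_add_one_left le_add_diff_inverse2 one_le_numeral order_trans)
  ultimately have "b * (b - 1) dvd q + b" by (simp add: divides_mult)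
  moreover have "q * (A - 1) + q = q * A" using A1 by (cases A) auto
  then have "(q * (A - 1) - b) + (q + b) = q * A" using True by linarith
  moreover have "b * (b - 1) dvd q * A" using A by simp
  ultimately show ?thesis by (metis dvd_add_left_iff)
qed simp

text \<open>
  The n with a n + b = q (c' a w - 1), q = c div (c' - c); then a n + b - 1 = (q + 1)(c a w - 1).
\<close>
definition pair_witness :: "nat \<Rightarrow> nat \<Rightarrow> nat \<Rightarrow> nat \<Rightarrow> nat \<Rightarrow> nat" where
  "pair_witness a b c c' w = (c div (c' - c) * (c' * a * w - 1) - b) div a"

lemma pair_witness:
  assumes b: "2 \<le> b" and a: "a = b * (b - 1)"
    and C: "ratio_clique b C" and cC: "c \<in> C" "c' \<in> C" and cc: "c < c'" and w: "1 \<le> w"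
  defines "n \<equiv> pair_witness a b c c' w" and "q \<equiv> c div (c' - c)"
  shows "a * n + b = q * (c' * a * w - 1)" "1 \<le> n" "n \<le> c * c' * w"
    "\<And>f. cm_unit f \<Longrightarrow> norm (f (a * n + b) - f (a * n + b - 1))
        = norm (step_quotient f (c * a * w) - step_quotient f (c' * a * w))"
proof -
  note Q = ratio_clique_pair_quotient[OF C cC cc, folded q_def]
  have "2 * 1 \<le> b * (b - 1)" using b by (intro mult_le_mono) auto
  then have a2: "2 \<le> a" by (simp add: a)
  have c1: "1 \<le> c" using C cC by (auto simp: ratio_clique_def)
  have "2 * a * 1 \<le> c' * a * w" using c1 cc w by (intro mult_le_mono) auto
  moreover have "b \<le> q" using Q(1,4) by (simp add: dvd_imp_le)
  ultimately have "b * (2 * a - 1) \<le> q * (c' * a * w - 1)"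
    by (metis diff_le_mono mult_1_right mult_le_mono)
  moreover have "a + b \<le> b * (2 * a - 1)"
  proof -
    have "2 * a \<le> b * a" using b by (rule mult_le_mono1)
    moreover have "b * 2 \<le> b * a" using a2 by (rule mult_le_mono2)
    moreover have "b * (2 * a - 1) = 2 * (b * a) - b" by (simp add: diff_mult_distrib2)
    ultimately show ?thesis by linarith
  qed
  ultimately have big: "a + b \<le> q * (c' * a * w - 1)" by linarith
  have "a dvd q * (c' * a * w - 1) - b" unfolding a using Q(1,2) b by (intro dvd_mult_pred_minus) simp_all
  then show eq: "a * n + b = q * (c' * a * w - 1)" using big by (simp add: n_def pair_witness_def q_def)
  then show "1 \<le> n" using big a2 by (cases n) auto
  have "a * n \<le> q * (c' * a * w - 1)" using eq by linarith
  also have "\<dots> \<le> c * (c' * a * w)" using Q(5) by (simp add: mult_le_mono)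
  also have "\<dots> = a * (c * c' * w)" by (simp add: mult_ac)
  finally have "a * n \<le> a * (c * c' * w)" .
  then show "n \<le> c * c' * w" using a2 by simp
  fix f :: "nat \<Rightarrow> complex" assume f: "cm_unit f"
  have "q * (c' * a * w) = (q + 1) * (c * a * w)" using Q(3) by (metis mult.assoc)
  moreover have "1 * 2 * 1 \<le> c * a * w" "1 * 2 * 1 \<le> c' * a * w"
    using c1 cc a2 w by (intro mult_le_mono; simp)+
  ultimately show "norm (f (a * n + b) - f (a * n + b - 1))
        = norm (step_quotient f (c * a * w) - step_quotient f (c' * a * w))"
    unfolding eq using Q(4) by (intro cm_unit_norm_diff_pred[OF f]) auto
qed

lemma pair_witness_inj:
  assumes b: "2 \<le> b" and a: "a = b * (b - 1)"
    and C: "ratio_clique b C" and cC: "c \<in> C" "c' \<in> C" and cc: "c < c'"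
  shows "inj_on (pair_witness a b c c') {1..}"
proof (rule inj_onI)
  fix w w' assume w: "w \<in> {1..}" "w' \<in> {1..}" and eq: "pair_witness a b c c' w = pair_witness a b c c' w'"
  define q where "q = c div (c' - c)"
  have "q * (c' * a * w - 1) = a * pair_witness a b c c' w + b"
    using pair_witness(1)[OF b a C cC cc, of w] w by (simp add: q_def)
  also have "\<dots> = q * (c' * a * w' - 1)"
    using pair_witness(1)[OF b a C cC cc, of w'] w eq by (simp add: q_def)
  finally have "q * (c' * a * w - 1) = q * (c' * a * w' - 1)" .
  moreover have "1 \<le> q" using ratio_clique_pair_quotient(4)[OF C cC cc] by (simp add: q_def)
  ultimately have diff: "c' * a * w - 1 = c' * a * w' - 1" by simp
  have pos: "0 < c' * a" using cc b by (simp add: a)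
  then have "1 \<le> c' * a * w" "1 \<le> c' * a * w'" using w by simp_all
  then have "c' * a * w = c' * a * w'" using diff by linarith
  then show "w = w'" using pos by simp
qed

section \<open>Lower density\<close>

lemma lower_density_ge:
  assumes "\<forall>\<^sub>F N in sequentially. \<delta> \<le> real (card (A \<inter> {1..N})) / real N"
  shows "\<delta> \<le> lower_density A"
proof -
  let ?r = "\<lambda>N. ereal (real (card (A \<inter> {1..N})) / real N)"
  have "ereal \<delta> \<le> liminf ?r"
    using assms by (intro Liminf_bounded) (simp add: eventually_mono)
  \<comment> \<open>the upper bound excludes the junk value of real_of_ereal at \<infinity>\<close>
  moreover have "card (A \<inter> {1..N}) \<le> N" for N
    using card_mono[of "{1..N}" "A \<inter> {1..N}"] by simp
  then have "liminf ?r \<le> 1"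
    by (intro Liminf_le always_eventually) (auto simp: divide_le_eq)
  ultimately show ?thesis unfolding lower_density_def by (cases "liminf ?r") auto
qed

lemma lower_density_pos_by_injection:
  fixes h :: "nat \<Rightarrow> 'p" and g :: "nat \<Rightarrow> nat" and B :: nat
  assumes P: "finite P"
    and hg: "\<And>w. 1 \<le> w \<Longrightarrow> h w \<in> P \<and> g w \<in> A \<and> 1 \<le> g w \<and> g w \<le> B * w"
    and inj: "inj_on (\<lambda>w. (h w, g w)) {1..}"
  shows "0 < lower_density A"
proof -
  have B: "1 \<le> B" using hg[of 1] by auto
  have "h 1 \<in> P" using hg[of 1] by simp
  then have P1: "0 < card P" using P by (auto simp: card_gt_0_iff)
  have count: "N div B \<le> card P * card (A \<inter> {1..N})" for N
  proof -
    have "g w \<le> N" if "w \<in> {1..N div B}" for w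
    proof -
      have "g w \<le> B * w" using hg[of w] that by simp
      also have "\<dots> \<le> B * (N div B)" using that by simp
      also have "\<dots> \<le> N" by (simp add: times_div_less_eq_dividend)
      finally show ?thesis .
    qed
    then have "(\<lambda>w. (h w, g w)) ` {1..N div B} \<subseteq> P \<times> (A \<inter> {1..N})" using hg by auto
    moreover have "inj_on (\<lambda>w. (h w, g w)) {1..N div B}" by (rule inj_on_subset[OF inj]) auto
    ultimately have "card {1..N div B} \<le> card (P \<times> (A \<inter> {1..N}))"
      using P by (intro card_inj_on_le) auto
    then show ?thesis by (simp add: card_cartesian_product)
  qed
  define \<delta> where "\<delta> = 1 / (2 * real B * real (card P))"
  have "\<delta> \<le> real (card (A \<inter> {1..N})) / real N" if N: "B \<le> N" for N
  proof -
    have "N = B * (N div B) + N mod B" by simp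
    moreover have "N mod B < B" using B by simp
    moreover have "0 < N div B" using N B by (simp add: div_greater_zero_iff)
    then have "B \<le> B * (N div B)" by simp
    ultimately have "N \<le> 2 * B * (N div B)" by linarith
    also have "\<dots> \<le> 2 * B * (card P * card (A \<inter> {1..N}))" using count by simp
    finally have "N \<le> 2 * B * card P * card (A \<inter> {1..N})" by (simp add: mult.assoc)
    then have "real N \<le> 2 * real B * real (card P) * real (card (A \<inter> {1..N}))"
      by (metis of_nat_le_iff of_nat_mult of_nat_numeral)
    then have "real N / (2 * real B * real (card P)) \<le> real (card (A \<inter> {1..N}))"
      using B P1 by (simp add: divide_le_eq mult_ac)
    then show ?thesis using B N by (simp add: \<delta>_def le_divide_eq)
  qed
  then have "\<delta> \<le> lower_density A"
    by (intro lower_density_ge) (auto simp: eventually_sequentially)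
  moreover have "0 < \<delta>" using B P1 by (simp add: \<delta>_def)
  ultimately show ?thesis by linarith
qed

lemma ratio_clique_with_close_pairs:
  fixes f :: "'j \<Rightarrow> nat \<Rightarrow> complex" and \<epsilon> :: real
  assumes J: "finite J" and \<epsilon>: "0 < \<epsilon>" and b: "2 \<le> b" and a: "a = b * (b - 1)"
    and f: "\<And>j. j \<in> J \<Longrightarrow> cm_unit (f j)"
  obtains C pc where "ratio_clique b C"
    "\<forall>w\<ge>1. pc w \<in> C \<times> C \<and> fst (pc w) < snd (pc w) \<and>
       (\<forall>j\<in>J. norm (step_quotient (f j) (fst (pc w) * a * w) - step_quotient (f j) (snd (pc w) * a * w)) < \<epsilon>)"
proof -
  obtain K where K: "\<forall>(C :: nat set) (z :: nat \<Rightarrow> 'j \<Rightarrow> complex). K < card C \<longrightarrow>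
      (\<forall>c\<in>C. \<forall>j\<in>J. norm (z c j) \<le> 1) \<longrightarrow>
      (\<exists>c\<in>C. \<exists>c'\<in>C. c < c' \<and> (\<forall>j\<in>J. norm (z c j - z c' j) < \<epsilon>))"
    using pigeonhole_close_pair[OF J \<epsilon>] by blast
  obtain C where C: "ratio_clique b C" "card C = Suc K" using ratio_clique_exists[OF b] by blast
  define close where "close w p \<longleftrightarrow> p \<in> C \<times> C \<and> fst p < snd p \<and>
      (\<forall>j\<in>J. norm (step_quotient (f j) (fst p * a * w) - step_quotient (f j) (snd p * a * w)) < \<epsilon>)"
    for w p
  have "\<forall>w\<ge>1. close w (SOME p. close w p)"
  proof (intro allI impI)
    fix w :: nat assume w: "1 \<le> w"
    have "2 * 1 \<le> b * (b - 1)" using b by (intro mult_le_mono) auto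
    then have "1 * 2 * 1 \<le> c * a * w" if "c \<in> C" for c
      using C(1) that a w by (intro mult_le_mono) (auto simp: ratio_clique_def Suc_le_eq)
    then have "\<forall>c\<in>C. \<forall>j\<in>J. norm (step_quotient (f j) (c * a * w)) \<le> 1"
      using f cm_unit_norm_step_quotient by simp
    then have "\<exists>p. close w p"
      using K[rule_format, of C "\<lambda>c j. step_quotient (f j) (c * a * w)"] C(2) by (auto simp: close_def)
    then show "close w (SOME p. close w p)" by (rule someI_ex)
  qed
  with C(1) show thesis by (intro that[of C "\<lambda>w. SOME p. close w p"]) (simp_all only: close_def)
qed

theorem proposition5p1:
  fixes r a b :: nat and \<epsilon> :: real and f :: "nat \<Rightarrow> nat \<Rightarrow> complex"
  assumes "r \<ge> 1" and "b \<ge> 2" and "a = b * (b - 1)"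
    and "\<epsilon> > 0"
    and "\<And>j. j \<in> {1..r} \<Longrightarrow> cm_unit (f j)"
  shows "lower_density {n. n \<ge> 1 \<and> (\<forall>j\<in>{1..r}. cmod (f j (a*n+b) - f j (a*n+b-1)) < \<epsilon>)} > 0"
    (is "lower_density ?Good > 0")
proof -
  note b = assms(2) and a = assms(3) and f = assms(5)
  obtain C pc where C: "ratio_clique b C" and pc: "\<forall>w\<ge>1. pc w \<in> C \<times> C \<and> fst (pc w) < snd (pc w) \<and>
      (\<forall>j\<in>{1..r}. norm (step_quotient (f j) (fst (pc w) * a * w) - step_quotient (f j) (snd (pc w) * a * w)) < \<epsilon>)"
    by (rule ratio_clique_with_close_pairs[OF finite_atLeastAtMost assms(4) b a f])
  define g where "g w = pair_witness a b (fst (pc w)) (snd (pc w)) w" for w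
  have "pc w \<in> C \<times> C \<and> g w \<in> ?Good \<and> 1 \<le> g w \<and> g w \<le> Max C * Max C * w" if w: "1 \<le> w" for w
  proof -
    obtain c c' where p: "pc w = (c, c')" by fastforce
    then have cC: "c \<in> C" "c' \<in> C" "c < c'"
      and near: "\<forall>j\<in>{1..r}. norm (step_quotient (f j) (c * a * w) - step_quotient (f j) (c' * a * w)) < \<epsilon>"
      using pc w by auto
    have n: "g w = pair_witness a b c c' w" by (simp add: g_def p)
    note W = pair_witness[OF b a C cC w, folded n]
    have "\<forall>j\<in>{1..r}. cmod (f j (a * g w + b) - f j (a * g w + b - 1)) < \<epsilon>"
      using W(4)[OF f] near by simp
    moreover have "c * c' * w \<le> Max C * Max C * w"
      using C cC by (simp add: ratio_clique_def mult_le_mono)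
    then have "g w \<le> Max C * Max C * w" using W(3) by linarith
    ultimately show ?thesis using W(2) cC by (simp add: p)
  qed
  moreover have "inj_on (\<lambda>w. (pc w, g w)) {1..}"
  proof (rule inj_onI)
    fix w w' assume w: "w \<in> {1..}" "w' \<in> {1..}" and eq: "(pc w, g w) = (pc w', g w')"
    obtain c c' where p: "pc w = (c, c')" by fastforce
    then have cC: "c \<in> C" "c' \<in> C" "c < c'" using pc w by auto
    from eq p have "pc w' = (c, c')" "g w = g w'" by simp_all
    then have "pair_witness a b c c' w = pair_witness a b c c' w'" by (simp add: g_def p)
    then show "w = w'" by (rule inj_onD[OF pair_witness_inj[OF b a C cC] _ w])
  qed
  moreover have "finite (C \<times> C)" using C by (simp add: ratio_clique_def)
  ultimately show ?thesis by (intro lower_density_pos_by_injection[of "C \<times> C"])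
qed

end
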